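(* Let $h,h'\colon Z\to X$ and $f,g\colon X\to Y$ be continuous maps such that $f\circ h'\simeq g\circ h'$. Then $\mathrm{D}(f\circ h,g\circ h)\leq \mathrm{D}(h,h')$.
   Context: For continuous maps $f,g\colon X\to Y$, the homotopic distance $\mathrm{D}(f,g)$ is the least integer $n\geq 0$ such that there is an open cover $\{U_0,\dots,U_n\}$ of $X$ with $f|_{U_j}\simeq g|_{U_j}$ for all $j$; if no such cover exists, $\mathrm{D}(f,g)=\infty$. *)

theory Defs
  imports "HOL-Analysis.Analysis" "HOL-Library.Extended_Nat"
begin

text \<open>Homotopic distance D(f,g): least n such that X has an open cover U_0,...,U_n
  with f restricted to U_j homotopic to g restricted to U_j for every j;
  infinity if no such cover exists (Inf of the empty set of enat is infinity).\<close>
definition homotopic_distance ::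
  "'a topology \<Rightarrow> 'b topology \<Rightarrow> ('a \<Rightarrow> 'b) \<Rightarrow> ('a \<Rightarrow> 'b) \<Rightarrow> enat" where
  "homotopic_distance X Y f g =
     (INF n \<in> {n::nat. \<exists>U :: nat \<Rightarrow> 'a set.
          (\<forall>j\<le>n. openin X (U j)) \<and>
          topspace X \<subseteq> (\<Union>j\<le>n. U j) \<and>
          (\<forall>j\<le>n. homotopic_with (\<lambda>_. True) (subtopology X (U j)) Y f g)}. enat n)"

end

theory Submission
  imports Defs
begin

text \<open>On any open set where \<open>h \<simeq> h'\<close> we have
  \<open>f \<circ> h \<simeq> f \<circ> h' \<simeq> g \<circ> h' \<simeq> g \<circ> h\<close>, so every open cover witnessing
  \<open>D(h, h')\<close> also witnesses \<open>D(f \<circ> h, g \<circ> h)\<close>.\<close>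

lemma homotopic_with_compose_homotopy_invariant:
  assumes hom: "homotopic_with (\<lambda>_. True) X Y h h'"
    and f: "continuous_map Y Z f" and g: "continuous_map Y Z g"
    and fg: "homotopic_with (\<lambda>_. True) X Z (f \<circ> h') (g \<circ> h')"
  shows "homotopic_with (\<lambda>_. True) X Z (f \<circ> h) (g \<circ> h)"
proof -
  have "homotopic_with (\<lambda>_. True) X Z (f \<circ> h) (f \<circ> h')"
    by (rule homotopic_with_compose_continuous_map_left[OF hom f]) auto
  moreover have "homotopic_with (\<lambda>_. True) X Z (g \<circ> h') (g \<circ> h)"
    by (rule homotopic_with_symD, rule homotopic_with_compose_continuous_map_left[OF hom g]) auto
  ultimately show ?thesis
    using fg by (metis homotopic_with_trans)
qed

lemma homotopic_distance_mono:
  assumes "\<And>U. openin X U \<Longrightarrow> homotopic_with (\<lambda>_. True) (subtopology X U) Y f g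
             \<Longrightarrow> homotopic_with (\<lambda>_. True) (subtopology X U) Y' f' g'"
  shows "homotopic_distance X Y' f' g' \<le> homotopic_distance X Y f g"
  unfolding homotopic_distance_def
  by (rule INF_superset_mono) (use assms in blast)+

theorem proposition3p8:
  fixes Z :: "'z topology" and X :: "'x topology" and Y :: "'y topology"
    and h h' :: "'z \<Rightarrow> 'x" and f g :: "'x \<Rightarrow> 'y"
  assumes "continuous_map Z X h" and "continuous_map Z X h'"
    and "continuous_map X Y f" and "continuous_map X Y g"
    and "homotopic_with (\<lambda>_. True) Z Y (f \<circ> h') (g \<circ> h')"
  shows "homotopic_distance Z Y (f \<circ> h) (g \<circ> h) \<le> homotopic_distance Z X h h'"
proof (rule homotopic_distance_mono)
  fix U
  assume "homotopic_with (\<lambda>_. True) (subtopology Z U) X h h'"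
  moreover have "homotopic_with (\<lambda>_. True) (subtopology Z U) Y (f \<circ> h') (g \<circ> h')"
    using homotopic_from_subtopology[OF assms(5)] .
  ultimately show "homotopic_with (\<lambda>_. True) (subtopology Z U) Y (f \<circ> h) (g \<circ> h)"
    using homotopic_with_compose_homotopy_invariant assms(3,4) by blast
qed

end
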